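(* With $\alpha(m)=\frac12(m^2-m)$ and $\mathcal{A}:=\sum_{m\ge2}\frac1m\sum_{k=\alpha(m)}^{\beta(m)}\frac1k$, where $\beta(m)=\frac12(m^2+m)-1$, one has $$\mathcal{A}=\sum_{m\ge2}\frac{H_{\alpha(m+1)-1}}{m^2+m}=\frac{\gamma}{2}+\frac12\sum_{j\ge3}\frac{\psi(\alpha(j))}{\alpha(j)},$$ and all these series converge.
   Context: $H_n=\sum_{j=1}^n\frac1j$ is the $n$-th harmonic number ($H_0=0$), $\gamma$ is Euler's constant, and $\psi=\Gamma'/\Gamma$ is the digamma function. *)

theory Defs
  imports "HOL-Analysis.Analysis"
begin

definition alpha :: "nat \<Rightarrow> nat" where
  "alpha m = (m^2 - m) div 2"

definition beta :: "nat \<Rightarrow> nat" where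
  "beta m = (m^2 + m) div 2 - 1"

definition A_term :: "nat \<Rightarrow> real" where
  "A_term m = (1 / real m) * (\<Sum>k = alpha m..beta m. 1 / real k)"

definition calA :: real where
  "calA = (\<Sum>m. A_term (m + 2))"

end

theory Submission
  imports Defs "HOL-Real_Asymp.Real_Asymp"
begin

text \<open>Since beta m = alpha (m+1) - 1, the inner sum of A is h (m+1) - h m, where
  h m = H (alpha m - 1) = psi (alpha m) + gamma. Summation by parts against the weights 1/m turns A
  into the series of h (m+1) / (m (m+1)); the boundary term h M / M vanishes because h grows only
  logarithmically. As m (m+1) = 2 alpha (m+1), that term equals (psi (alpha (m+1)) + gamma) / (2 alpha (m+1)),
  and the sum of 1 / (m (m+1)) over m \<ge> 2 is 1/2, which produces gamma/2.\<close>

lemma sum_diff_mult_by_parts: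
  fixes a b :: "nat \<Rightarrow> 'a::comm_ring"
  shows "(\<Sum>m<M. (a (Suc m) - a m) * b m)
           = a M * b M - a 0 * b 0 + (\<Sum>m<M. a (Suc m) * (b m - b (Suc m)))"
  by (induction M) (simp_all add: algebra_simps)

lemma sums_diff_mult_by_parts:
  fixes a b :: "nat \<Rightarrow> 'a::real_normed_field"
  assumes "(\<lambda>m. a (Suc m) * (b m - b (Suc m))) sums S"
    and "(\<lambda>M. a M * b M) \<longlonglongrightarrow> 0"
  shows "(\<lambda>m. (a (Suc m) - a m) * b m) sums (S - a 0 * b 0)"
proof -
  have "(\<lambda>M. a M * b M - a 0 * b 0 + (\<Sum>m<M. a (Suc m) * (b m - b (Suc m))))
          \<longlonglongrightarrow> 0 - a 0 * b 0 + S"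
    using assms unfolding sums_def by (intro tendsto_intros)
  then show ?thesis
    unfolding sums_def sum_diff_mult_by_parts by simp
qed

lemma sum_inverse_greaterThanAtMost:
  "a \<le> b \<Longrightarrow> (\<Sum>k = Suc a..b. 1 / real k) = harm b - harm a"
  using sum.ub_add_nat[of 1 a "\<lambda>k. 1 / real k" "b - a"]
  by (simp add: harm_def inverse_eq_divide)

lemma harm_le_ln: "harm n \<le> 1 + ln (real n + 1)"
proof (cases "n = 0")
  case False
  then have "harm n - ln (real n) \<le> harm 1 - ln (real (1::nat))"
    by (intro euler_mascheroni_sequence_decreasing) auto
  moreover have "ln (real n) \<le> ln (real n + 1)"
    using False by simp
  ultimately show ?thesis
    by (simp add: harm_def)
qed (simp add: harm_def)

lemma alpha_Suc: "alpha (Suc n) = alpha n + n"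
proof -
  have "Suc n ^ 2 - Suc n = (n ^ 2 - n) + 2 * n"
    by (simp add: power2_eq_square)
  then show ?thesis
    unfolding alpha_def by simp
qed

lemma beta_eq_alpha_Suc: "beta m = alpha (Suc m) - 1"
  unfolding beta_def alpha_def by (simp add: power2_eq_square)

lemma alpha_0: "alpha 0 = 0"
  by (simp add: alpha_def)

lemma alpha_2: "alpha 2 = 1"
  by (simp add: alpha_Suc alpha_0 numeral_2_eq_2)

lemma of_nat_alpha: "real (alpha n) = real n * (real n - 1) / 2"
  by (induction n) (simp_all add: alpha_0 alpha_Suc field_simps)

lemma alpha_pos: "2 \<le> n \<Longrightarrow> 0 < alpha n"
  by (induction n rule: dec_induct) (simp_all add: alpha_2 alpha_Suc)

lemma alpha_le_square: "alpha n \<le> n ^ 2"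
  unfolding alpha_def by simp

definition harm_alpha :: "nat \<Rightarrow> real" where
  "harm_alpha n = harm (alpha n - 1)"

lemma A_term_eq_harm_alpha_diff:
  assumes "2 \<le> m"
  shows "A_term m = (harm_alpha (Suc m) - harm_alpha m) / real m"
proof -
  have "alpha m = Suc (alpha m - 1)"
    using alpha_pos[OF assms] by simp
  moreover have "alpha m - 1 \<le> alpha (Suc m) - 1"
    by (simp add: alpha_Suc)
  ultimately show ?thesis
    unfolding A_term_def harm_alpha_def beta_eq_alpha_Suc
    by (metis sum_inverse_greaterThanAtMost mult.commute times_divide_eq_right mult_1_right)
qed

lemma harm_alpha_le: "harm_alpha n \<le> 1 + ln (real n ^ 2 + 1)"
proof -
  have "real (alpha n - 1) \<le> real n ^ 2"
    using alpha_le_square[of n] by (metis diff_le_self le_trans of_nat_le_iff of_nat_power)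
  then have "ln (real (alpha n - 1) + 1) \<le> ln (real n ^ 2 + 1)"
    by (subst ln_le_cancel_iff) (auto intro: add_nonneg_pos)
  then show ?thesis
    unfolding harm_alpha_def using harm_le_ln[of "alpha n - 1"] by simp
qed

lemma harm_alpha_over_tendsto_0: "(\<lambda>M. harm_alpha (M + 2) / real (M + 2)) \<longlonglongrightarrow> 0"
proof (rule tendsto_sandwich)
  show "\<forall>\<^sub>F M in sequentially. 0 \<le> harm_alpha (M + 2) / real (M + 2)"
    by (simp add: harm_alpha_def harm_nonneg)
  show "\<forall>\<^sub>F M in sequentially.
          harm_alpha (M + 2) / real (M + 2) \<le> (1 + ln (real (M + 2) ^ 2 + 1)) / real (M + 2)"
    by (intro always_eventually allI divide_right_mono harm_alpha_le) simp
  show "(\<lambda>M. (1 + ln (real (M + 2) ^ 2 + 1)) / real (M + 2)) \<longlonglongrightarrow> 0"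
    by real_asymp
qed simp

lemma summable_harm_alpha_over:
  "summable (\<lambda>m. harm_alpha (m + 3) / ((real m + 2) * (real m + 3)))"
proof (rule summable_comparison_test')
  let ?g = "\<lambda>m. (1 + ln (real (m + 3) ^ 2 + 1)) / ((real m + 2) * (real m + 3))"
  show "summable ?g"
  proof (rule summable_comparison_test_bigo)
    show "summable (\<lambda>n. norm (real n powr (-3/2)))"
      using summable_real_powr_iff[of "-3/2"] by simp
    show "?g \<in> O(\<lambda>n. real n powr (-3/2))"
      by real_asymp
  qed
  show "norm (harm_alpha (m + 3) / ((real m + 2) * (real m + 3))) \<le> ?g m" for m
    using harm_alpha_le[of "m + 3"]
    by (auto simp: harm_alpha_def harm_nonneg intro!: divide_right_mono)
qed

lemma A_term_sums:
  "(\<lambda>m. A_term (m + 2)) sums (\<Sum>m. harm_alpha (m + 3) / ((real m + 2) * (real m + 3)))"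
proof -
  let ?a = "\<lambda>m. harm_alpha (m + 2)" and ?b = "\<lambda>m. 1 / real (m + 2)"
  have "?a (Suc m) * (?b m - ?b (Suc m)) = harm_alpha (m + 3) / ((real m + 2) * (real m + 3))"
    for m by (simp add: field_simps numeral_3_eq_3)
  then have "(\<lambda>m. ?a (Suc m) * (?b m - ?b (Suc m))) sums
               (\<Sum>m. harm_alpha (m + 3) / ((real m + 2) * (real m + 3)))"
    using summable_harm_alpha_over by (simp add: summable_sums)
  from sums_diff_mult_by_parts[OF this] harm_alpha_over_tendsto_0
  have "(\<lambda>m. (?a (Suc m) - ?a m) * ?b m) sums
          ((\<Sum>m. harm_alpha (m + 3) / ((real m + 2) * (real m + 3))) - ?a 0 * ?b 0)"
    by simp
  moreover have "?a 0 = 0"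
    by (simp add: harm_alpha_def harm_def alpha_Suc alpha_0)
  moreover have "A_term (m + 2) = (?a (Suc m) - ?a m) * ?b m" for m
    using A_term_eq_harm_alpha_diff[of "m + 2"] by simp
  ultimately show ?thesis
    by simp
qed

lemma inverse_consecutive_products_sums: "(\<lambda>m. 1 / ((real m + 2) * (real m + 3))) sums (1 / 2)"
proof -
  have "(\<lambda>m. 1 / (real m + 2) - 1 / (real (Suc m) + 2)) sums (1 / (real 0 + 2) - 0)"
    by (rule telescope_sums') real_asymp
  moreover have "1 / (real m + 2) - 1 / (real (Suc m) + 2) = 1 / ((real m + 2) * (real m + 3))" for m
    by (simp add: field_simps)
  ultimately show ?thesis
    by simp
qed

lemma Digamma_alpha: "2 \<le> n \<Longrightarrow> Digamma (real (alpha n)) = harm_alpha n - euler_mascheroni"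
  using Digamma_of_nat[of "alpha n - 1", where 'a = real] alpha_pos[of n]
  by (simp add: harm_alpha_def Suc_diff_1)

lemma Digamma_alpha_series_sums:
  "(\<lambda>j. Digamma (real (alpha (j + 3))) / real (alpha (j + 3))) sums
     (2 * (\<Sum>m. harm_alpha (m + 3) / ((real m + 2) * (real m + 3))) - euler_mascheroni)"
proof -
  have "Digamma (real (alpha (j + 3))) / real (alpha (j + 3)) =
          2 * (harm_alpha (j + 3) / ((real j + 2) * (real j + 3)))
          - 2 * euler_mascheroni * (1 / ((real j + 2) * (real j + 3)))" for j
  proof -
    have alpha_eq: "real (alpha (j + 3)) = (real j + 2) * (real j + 3) / 2"
      by (simp add: of_nat_alpha)
    have Digamma_eq: "Digamma (real (alpha (j + 3))) = harm_alpha (j + 3) - euler_mascheroni"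
      by (rule Digamma_alpha) simp
    show ?thesis
      unfolding Digamma_eq unfolding alpha_eq by (simp add: field_simps diff_divide_distrib)
  qed
  then show ?thesis
    using sums_diff[OF sums_mult[OF summable_sums[OF summable_harm_alpha_over], of 2]
                       sums_mult[OF inverse_consecutive_products_sums, of "2 * euler_mascheroni"]]
    by simp
qed

theorem mainTheorem4:
  shows "summable (\<lambda>m. A_term (m + 2)) \<and>
    summable (\<lambda>m. (harm (alpha (m + 2 + 1) - 1) :: real) / (real (m + 2) ^ 2 + real (m + 2))) \<and>
    summable (\<lambda>j. Digamma (real (alpha (j + 3))) / real (alpha (j + 3))) \<and>
    calA = (\<Sum>m. (harm (alpha (m + 2 + 1) - 1) :: real) / (real (m + 2) ^ 2 + real (m + 2))) \<and>
    calA = euler_mascheroni / 2 + (1 / 2) * (\<Sum>j. Digamma (real (alpha (j + 3))) / real (alpha (j + 3)))"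
proof -
  have series_eq: "(\<lambda>m. harm (alpha (m + 2 + 1) - 1) / (real (m + 2) ^ 2 + real (m + 2))) =
                   (\<lambda>m. harm_alpha (m + 3) / ((real m + 2) * (real m + 3)))"
    by (simp add: harm_alpha_def power2_eq_square algebra_simps numeral_3_eq_3)
  show ?thesis
    unfolding series_eq calA_def
    using summable_harm_alpha_over
      sums_summable[OF A_term_sums] sums_unique[OF A_term_sums]
      sums_summable[OF Digamma_alpha_series_sums] sums_unique[OF Digamma_alpha_series_sums]
    by simp
qed

end
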